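(* Consider the three-door Monty Hall game described in the context as a zero-sum game in which Conie's payoff is her winning indicator. Let $P^*$ be Conie's mixed strategy assigning probability $1/3$ to each of $1\,\mathrm{s}\,\mathrm{s}$, $2\,\mathrm{s}\,\mathrm{s}$, $3\,\mathrm{s}\,\mathrm{s}$, and let $Q^*_{1,1,1}$ be Monte's mixed strategy assigning probability $1/3$ to each of $(1,2)$, $(2,1)$, $(3,1)$. Then the value of the game is $V=\max_P\min_Q W(P,Q)=\min_Q\max_P W(P,Q)=2/3$, where $W(P,Q)$ is Conie's winning probability, and $(P^*,Q^*_{1,1,1})$ is a minimax solution (saddle point). Moreover $P^*$ is equalizing: $W(P^*,Q)=2/3$ for every mixed strategy $Q$ of Monte.
   Context: Doors are numbered $1,2,3$. A pure strategy of Monte is a pair $(\theta,d)$ with $\theta\in\{1,2,3\}$ (the door hiding the prize) and $d\in\{1,2,3\}\setminus\{\theta\}$ (six strategies). A pure strategy of Conie is a triple $x\,a\,b$ with $x\in\{1,2,3\}$ and $a,b\in\{\mathrm{h},\mathrm{s}\}$ (twelve strategies). Under the profile $((\theta,d),x\,a\,b)$: Monte offers door $y=\theta$ if $x\neq\theta$ and $y=d$ if $x=\theta$; Conie's action is $a$ if $y$ is the smaller of the two doors in $\{1,2,3\}\setminus\{x\}$ and $b$ otherwise; her final choice is $z=x$ for action $\mathrm{h}$ and $z=y$ for action $\mathrm{s}$; she wins (payoff 1) iff $z=\theta$, else payoff 0, and Monte's payoff is the negative of Conie's. Mixed strategies are probability distributions on pure strategies, played independently; $W(P,Q)$ is the resulting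 probability that Conie wins. A profile $(P^*,Q^* )$ is a minimax solution if $W(P^*,Q^* )=\max_P W(P,Q^* )=\min_Q W(P^*,Q)$. *)

theory Defs
  imports Complex_Main
begin

datatype act = Hold | Switch

type_synonym monte_strat = "nat \<times> nat"
type_synonym conie_strat = "nat \<times> act \<times> act"

definition doors :: "nat set" where "doors = {1,2,3}"

definition MonteS :: "monte_strat set" where
  "MonteS = {(\<theta>, d). \<theta> \<in> doors \<and> d \<in> doors - {\<theta>}}"

definition ConieS :: "conie_strat set" where
  "ConieS = {(x, a, b). x \<in> doors}"

definition offer :: "monte_strat \<Rightarrow> conie_strat \<Rightarrow> nat" where
  "offer m c = (case m of (\<theta>, d) \<Rightarrow> case c of (x, a, b) \<Rightarrow>
      if x \<noteq> \<theta> then \<theta> else d)"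

definition action :: "monte_strat \<Rightarrow> conie_strat \<Rightarrow> act" where
  "action m c = (case c of (x, a, b) \<Rightarrow>
      if offer m c = Min (doors - {x}) then a else b)"

definition final_choice :: "monte_strat \<Rightarrow> conie_strat \<Rightarrow> nat" where
  "final_choice m c = (case c of (x, a, b) \<Rightarrow>
      (case action m c of Hold \<Rightarrow> x | Switch \<Rightarrow> offer m c))"

definition win :: "conie_strat \<Rightarrow> monte_strat \<Rightarrow> real" where
  "win c m = (if final_choice m c = fst m then 1 else 0)"

definition MixC :: "(conie_strat \<Rightarrow> real) set" where
  "MixC = {P. (\<forall>c. 0 \<le> P c) \<and> (\<forall>c. c \<notin> ConieS \<longrightarrow> P c = 0) \<and> sum P ConieS = 1}"

definition MixM :: "(monte_strat \<Rightarrow> real) set" where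
  "MixM = {Q. (\<forall>m. 0 \<le> Q m) \<and> (\<forall>m. m \<notin> MonteS \<longrightarrow> Q m = 0) \<and> sum Q MonteS = 1}"

definition W :: "(conie_strat \<Rightarrow> real) \<Rightarrow> (monte_strat \<Rightarrow> real) \<Rightarrow> real" where
  "W P Q = (\<Sum>c\<in>ConieS. \<Sum>m\<in>MonteS. P c * Q m * win c m)"

definition minimax_solution :: "(conie_strat \<Rightarrow> real) \<Rightarrow> (monte_strat \<Rightarrow> real) \<Rightarrow> bool" where
  "minimax_solution P Q \<longleftrightarrow> P \<in> MixC \<and> Q \<in> MixM \<and>
     (\<forall>P'\<in>MixC. W P' Q \<le> W P Q) \<and> (\<forall>Q'\<in>MixM. W P Q \<le> W P Q')"

definition Pstar :: "conie_strat \<Rightarrow> real" where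
  "Pstar c = (if c \<in> {(1, Switch, Switch), (2, Switch, Switch), (3, Switch, Switch)} then 1/3 else 0)"

definition Qstar111 :: "monte_strat \<Rightarrow> real" where
  "Qstar111 m = (if m \<in> {(1,2), (2,1), (3,1)} then 1/3 else 0)"

end

theory Submission
  imports Defs
begin

text \<open>If Conie picks a uniformly random door and always switches, she wins exactly when her
  first pick misses the prize, i.e. with probability 2/3 whatever Monte does.  Conversely, if
  Monte hides the prize uniformly and, when Conie's first pick is right, always opens the
  smaller remaining door, then against each first pick the two offers that share the same
  door label come from two different prize positions, and Conie can win only one of them;
  so no strategy of hers wins with probability more than 2/3.  A pair of strategies
  guaranteeing the same value from both sides is a saddle point.\<close>

lemma saddle_point_value:
  fixes f :: "'a \<Rightarrow> 'b \<Rightarrow> 'c :: conditionally_complete_linorder"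
  assumes "p \<in> A" "q \<in> B"
    and p_guarantees: "\<forall>y\<in>B. v \<le> f p y"
    and q_guarantees: "\<forall>x\<in>A. f x q \<le> v"
    and bdd_below: "\<forall>x\<in>A. bdd_below (f x ` B)"
    and bdd_above: "\<forall>y\<in>B. bdd_above ((\<lambda>x. f x y) ` A)"
  shows "(SUP x\<in>A. INF y\<in>B. f x y) = v \<and> (INF y\<in>B. SUP x\<in>A. f x y) = v"
proof
  have inf_le: "(INF y\<in>B. f x y) \<le> v" if "x \<in> A" for x
    using cINF_lower[of "f x" B q] bdd_below q_guarantees \<open>q \<in> B\<close> that by force
  have inf_p: "v \<le> (INF y\<in>B. f p y)"
    using \<open>q \<in> B\<close> p_guarantees by (intro cINF_greatest) auto
  show "(SUP x\<in>A. INF y\<in>B. f x y) = v"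
  proof (rule antisym)
    show "(SUP x\<in>A. INF y\<in>B. f x y) \<le> v"
      using \<open>p \<in> A\<close> inf_le by (intro cSUP_least) auto
    have "bdd_above ((\<lambda>x. INF y\<in>B. f x y) ` A)"
      using inf_le by (intro bdd_aboveI[of _ v]) auto
    then show "v \<le> (SUP x\<in>A. INF y\<in>B. f x y)"
      using cSUP_upper[OF \<open>p \<in> A\<close>] inf_p order_trans by blast
  qed
  have sup_ge: "v \<le> (SUP x\<in>A. f x y)" if "y \<in> B" for y
    using cSUP_upper[of p A "\<lambda>x. f x y"] bdd_above p_guarantees \<open>p \<in> A\<close> that by force
  have sup_q: "(SUP x\<in>A. f x q) \<le> v"
    using \<open>p \<in> A\<close> q_guarantees by (intro cSUP_least) auto
  show "(INF y\<in>B. SUP x\<in>A. f x y) = v"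
  proof (rule antisym)
    show "v \<le> (INF y\<in>B. SUP x\<in>A. f x y)"
      using \<open>q \<in> B\<close> sup_ge by (intro cINF_greatest) auto
    have "bdd_below ((\<lambda>y. SUP x\<in>A. f x y) ` B)"
      using sup_ge by (intro bdd_belowI[of _ v]) auto
    then show "(INF y\<in>B. SUP x\<in>A. f x y) \<le> v"
      using cINF_lower[OF _ \<open>q \<in> B\<close>] sup_q order_trans by blast
  qed
qed

lemma convex_combination_le:
  fixes w g :: "'a \<Rightarrow> real"
  assumes "\<forall>x\<in>S. 0 \<le> w x" "sum w S = 1" "\<forall>x\<in>S. g x \<le> v"
  shows "(\<Sum>x\<in>S. w x * g x) \<le> v"
proof -
  have "(\<Sum>x\<in>S. w x * g x) \<le> (\<Sum>x\<in>S. w x * v)"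
    using assms by (intro sum_mono mult_left_mono) auto
  also have "\<dots> = v"
    using assms by (simp add: sum_distrib_right[symmetric])
  finally show ?thesis .
qed

lemma convex_combination_const:
  fixes w g :: "'a \<Rightarrow> real"
  assumes "sum w S = 1" "\<forall>x\<in>S. g x = v"
  shows "(\<Sum>x\<in>S. w x * g x) = v"
  using assms by (simp add: sum_distrib_right[symmetric])

lemma MonteS_eq: "MonteS = {(1,2), (1,3), (2,1), (2,3), (3,1), (3,2)}"
  by (auto simp: MonteS_def doors_def)

lemma ConieS_eq: "ConieS = doors \<times> {Hold, Switch} \<times> {Hold, Switch}"
  unfolding ConieS_def by (auto intro: act.exhaust)

lemma finite_ConieS: "finite ConieS"
  by (simp add: ConieS_eq doors_def)

lemma W_eq_sum_MonteS: "W P Q = (\<Sum>m\<in>MonteS. Q m * (\<Sum>c\<in>ConieS. P c * win c m))"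
  unfolding W_def by (subst sum.swap) (simp add: sum_distrib_left algebra_simps)

lemma W_eq_sum_ConieS: "W P Q = (\<Sum>c\<in>ConieS. P c * (\<Sum>m\<in>MonteS. Q m * win c m))"
  unfolding W_def by (simp add: sum_distrib_left algebra_simps)

lemma W_bounds:
  assumes "P \<in> MixC" "Q \<in> MixM"
  shows "0 \<le> W P Q \<and> W P Q \<le> 1"
proof
  show "0 \<le> W P Q"
    using assms unfolding W_def MixC_def MixM_def by (intro sum_nonneg) (auto simp: win_def)
  have "(\<Sum>m\<in>MonteS. Q m * win c m) \<le> 1" for c
    using assms by (intro convex_combination_le) (auto simp: MixM_def win_def)
  then show "W P Q \<le> 1"
    unfolding W_eq_sum_ConieS using assms by (intro convex_combination_le) (auto simp: MixC_def)
qed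

lemma Pstar_in_MixC: "Pstar \<in> MixC"
proof -
  have "sum Pstar ConieS = sum Pstar {(1, Switch, Switch), (2, Switch, Switch), (3, Switch, Switch)}"
    using finite_ConieS by (intro sum.mono_neutral_right) (auto simp: ConieS_eq doors_def Pstar_def)
  then show ?thesis
    by (auto simp: MixC_def Pstar_def ConieS_eq doors_def)
qed

lemma Qstar111_in_MixM: "Qstar111 \<in> MixM"
  by (auto simp: MixM_def Qstar111_def MonteS_eq)

lemma Pstar_payoff_pure:
  assumes "m \<in> MonteS"
  shows "(\<Sum>c\<in>ConieS. Pstar c * win c m) = 2/3"
proof -
  have "(\<Sum>c\<in>ConieS. Pstar c * win c m)
      = (\<Sum>c\<in>{(1, Switch, Switch), (2, Switch, Switch), (3, Switch, Switch)}. Pstar c * win c m)"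
    using finite_ConieS by (intro sum.mono_neutral_right) (auto simp: ConieS_eq doors_def Pstar_def)
  with assms show ?thesis
    by (auto simp: MonteS_eq Pstar_def win_def final_choice_def action_def offer_def doors_def)
qed

lemma Qstar111_payoff_pure:
  assumes "c \<in> ConieS"
  shows "(\<Sum>m\<in>MonteS. Qstar111 m * win c m) \<le> 2/3"
proof -
  have "(\<Sum>m\<in>MonteS. Qstar111 m * win c m) = (\<Sum>m\<in>{(1,2), (2,1), (3,1)}. Qstar111 m * win c m)"
    by (intro sum.mono_neutral_right) (auto simp: MonteS_eq Qstar111_def)
  with assms show ?thesis
    by (auto simp: ConieS_eq Qstar111_def win_def final_choice_def action_def offer_def doors_def
        split: act.splits)
qed

lemma W_Pstar: "Q \<in> MixM \<Longrightarrow> W Pstar Q = 2/3"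
  unfolding W_eq_sum_MonteS
  by (intro convex_combination_const) (auto simp: MixM_def Pstar_payoff_pure)

lemma W_Qstar111_le: "P \<in> MixC \<Longrightarrow> W P Qstar111 \<le> 2/3"
  unfolding W_eq_sum_ConieS
  using Qstar111_payoff_pure by (intro convex_combination_le) (auto simp: MixC_def)

theorem mainTheorem6:
  shows "(SUP P\<in>MixC. INF Q\<in>MixM. W P Q) = 2/3
     \<and> (INF Q\<in>MixM. SUP P\<in>MixC. W P Q) = 2/3
     \<and> minimax_solution Pstar Qstar111
     \<and> W Pstar Qstar111 = 2/3
     \<and> (\<forall>Q\<in>MixM. W Pstar Q = 2/3)"
proof -
  have equalizing: "\<forall>Q\<in>MixM. W Pstar Q = 2/3"
    using W_Pstar by blast
  have game_value: "(SUP P\<in>MixC. INF Q\<in>MixM. W P Q) = 2/3 \<and> (INF Q\<in>MixM. SUP P\<in>MixC. W P Q) = 2/3"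
  proof (rule saddle_point_value[OF Pstar_in_MixC Qstar111_in_MixM])
    show "\<forall>P\<in>MixC. bdd_below (W P ` MixM)" "\<forall>Q\<in>MixM. bdd_above ((\<lambda>P. W P Q) ` MixC)"
      using W_bounds by (auto intro: bdd_belowI[of _ 0] bdd_aboveI[of _ 1])
  qed (use equalizing W_Qstar111_le in auto)
  have saddle_value: "W Pstar Qstar111 = 2/3"
    using W_Pstar Qstar111_in_MixM by blast
  have "minimax_solution Pstar Qstar111"
    unfolding minimax_solution_def saddle_value
    using Pstar_in_MixC Qstar111_in_MixM equalizing W_Qstar111_le by auto
  with game_value saddle_value equalizing show ?thesis by auto
qed

end
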